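(* Let $0<a\le1$, $H=T^a$, and let $f$ be a real-valued even function with $\hat f\in C_c^\infty(\mathbb{R})$ and $\operatorname{supp}\hat f\subset(-a,a)$. Let $w\ge0$ with $\int w=1$ and $\hat w$ compactly supported. Then, as $T\to\infty$, $$\langle (N_f^{\mathrm{osc}})^2\rangle_{T,H}=\int_{-\infty}^\infty\min(|u|,1)\,\hat f(u)^2\,du+O\Big(\frac1{\log T}\Big).$$
   Context: $\hat f(u)=\int f(x)e^{-2\pi ixu}\,dx$. $\Lambda$ is the von Mangoldt function. For real $\tau$, $$N_f^{\mathrm{osc}}(\tau)=-\frac{1}{\log T}\sum_{n\ge2}\frac{\Lambda(n)}{\sqrt n}\hat f\Big(\frac{\log n}{\log T}\Big)\big(e^{i\tau\log n}+e^{-i\tau\log n}\big).$$ For a function $W$ of $\tau$, $\langle W\rangle_{T,H}=\int_{-\infty}^\infty W(\tau)w\big(\frac{\tau-T}{H}\big)\frac{d\tau}{H}$. *)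

theory Defs
  imports "HOL-Analysis.Analysis" "HOL-Number_Theory.Prime_Powers" "HOL-Library.Landau_Symbols"
begin

definition fourier :: "(real \<Rightarrow> real) \<Rightarrow> real \<Rightarrow> complex" where
  "fourier f u = (LINT x|lborel. complex_of_real (f x) * cis (- 2 * pi * x * u))"

definition smooth_fun :: "(real \<Rightarrow> complex) \<Rightarrow> bool" where
  "smooth_fun g \<longleftrightarrow> (\<exists>D. D 0 = g \<and> (\<forall>k x. (D k has_vector_derivative D (Suc k) x) (at x)))"

definition fsupp :: "(real \<Rightarrow> complex) \<Rightarrow> real set" where
  "fsupp g = closure {u. g u \<noteq> 0}"

definition N_osc :: "(real \<Rightarrow> real) \<Rightarrow> real \<Rightarrow> real \<Rightarrow> complex" where
  "N_osc f T \<tau> = - complex_of_real (1 / ln T) *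
     (\<Sum>n. if n \<ge> 2 then complex_of_real (mangoldt n / sqrt (real n))
            * fourier f (ln (real n) / ln T)
            * (cis (\<tau> * ln (real n)) + cis (- \<tau> * ln (real n))) else 0)"

definition wavg :: "(real \<Rightarrow> real) \<Rightarrow> (real \<Rightarrow> complex) \<Rightarrow> real \<Rightarrow> real \<Rightarrow> complex" where
  "wavg w W T H = (LINT \<tau>|lborel. W \<tau> * complex_of_real (w ((\<tau> - T) / H) / H))"

end

theory Submission
  imports Defs "HOL-Real_Asymp.Real_Asymp"
begin

(* Squaring N_f^osc and averaging against w((tau - T)/H)/H turns each pair of frequencies
   log m, log n into a value of hat w at H (+-log m +- log n) / (2 pi).  Since hat f vanishes
   outside [-b, b] for some b < a, only n <= T^b occur, and distinct such frequencies are at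
   least T^(-b) apart; with H = T^a and hat w compactly supported, every off-diagonal term
   vanishes exactly once T is large.  What is left is
     (2 / log^2 T) * sum_{n <= T^b} Lambda(n)^2 / n * hat f(log n / log T)^2.
   Partial summation against Mertens' estimate sum_{n <= x} Lambda(n)/n = log x + O(1), which
   follows from Chebyshev's bound psi(x) = O(x), evaluates this as
   2 * int_0^b u hat f(u)^2 du + O(1 / log T); here Lambda(n)^2 may be replaced by
   Lambda(n) log n because the two differ only at higher prime powers, which contribute
   O(log T) to the sum.  As hat f is even and b <= 1, the integral is half of
   int min(|u|, 1) hat f(u)^2 du. *)

section \<open>Chebyshev and Mertens estimates\<close>

lemma ln_le_iff_le_nat_floor_exp:
  assumes "0 < n"
  shows "ln (real n) \<le> y \<longleftrightarrow> n \<le> nat \<lfloor>exp y\<rfloor>"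
proof -
  have "ln (real n) \<le> y \<longleftrightarrow> real n \<le> exp y"
    using assms by (metis exp_le_cancel_iff exp_ln of_nat_0_less_iff)
  then show ?thesis by (simp add: le_nat_iff le_floor_iff)
qed

lemma ln_div_mem_interval:
  assumes "1 \<le> n" "0 < L" "n \<le> nat \<lfloor>exp (b * L)\<rfloor>"
  shows "ln (real n) / L \<in> {0..b}"
  using assms ln_le_iff_le_nat_floor_exp[of n "b * L"] by (simp add: pos_divide_le_eq)

definition ln_fact :: "nat \<Rightarrow> real" where
  "ln_fact N = (\<Sum>k=1..N. ln (real k))"

definition chebyshev_psi :: "nat \<Rightarrow> real" where
  "chebyshev_psi N = (\<Sum>d=1..N. mangoldt d)"

definition mertens_sum :: "nat \<Rightarrow> real" where
  "mertens_sum N = (\<Sum>d=1..N. mangoldt d / real d)"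

lemma ln_fact_eq_sum_mangoldt: "ln_fact N = (\<Sum>d=1..N. mangoldt d * real (N div d))"
proof (induction N)
  case 0
  show ?case by (simp add: ln_fact_def)
next
  case (Suc N)
  have divisors: "{d. d dvd Suc N} = {d\<in>{1..Suc N}. d dvd Suc N}"
    by (auto intro: dvd_imp_le) (metis Suc_leI dvd_0_left_iff nat.distinct(1) neq0_conv)
  have "(\<Sum>d=1..Suc N. mangoldt d * real (Suc N div d)) =
        (\<Sum>d=1..Suc N. mangoldt d * real (N div d) + (if d dvd Suc N then mangoldt d else 0))"
    by (intro sum.cong refl) (auto simp: div_Suc mod_eq_0_iff_dvd algebra_simps)
  also have "\<dots> = (\<Sum>d=1..Suc N. mangoldt d * real (N div d))
      + (\<Sum>d=1..Suc N. if d dvd Suc N then mangoldt d else 0)"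
    by (rule sum.distrib)
  also have "(\<Sum>d=1..Suc N. if d dvd Suc N then mangoldt d else 0) = (\<Sum>d | d dvd Suc N. mangoldt d)"
    unfolding divisors by (rule sum.inter_filter[symmetric]) simp
  also have "(\<Sum>d | d dvd Suc N. mangoldt d) = ln (real (Suc N))"
    using mangoldt_sum[of "Suc N", where ?'a = real] by simp
  finally show ?case using Suc by (simp add: ln_fact_def)
qed

lemma ln_fact_le: "ln_fact N \<le> real N * ln (real N)"
proof -
  have "ln_fact N \<le> (\<Sum>k=1..N. ln (real N))"
    unfolding ln_fact_def by (intro sum_mono) auto
  then show ?thesis by simp
qed

lemma ln_fact_ge: "1 \<le> N \<Longrightarrow> real N * ln (real N) - real N + 1 \<le> ln_fact N"
proof (induction N rule: nat_induct_at_least)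
  case base
  then show ?case by (simp add: ln_fact_def)
next
  case (Suc N)
  have N: "1 \<le> real N" using Suc by simp
  have "ln (real (Suc N)) = ln (real N) + ln (1 + 1 / real N)"
    using N by (simp add: ln_div field_simps)
  moreover have "real N * ln (1 + 1 / real N) \<le> 1"
    using mult_left_mono[OF ln_add_one_self_le_self[of "1 / real N"], of "real N"] N by simp
  moreover have "ln_fact (Suc N) = ln_fact N + ln (real (Suc N))" by (simp add: ln_fact_def)
  ultimately show ?case using Suc.IH by (simp add: algebra_simps)
qed

lemma chebyshev_psi_mono: "M \<le> N \<Longrightarrow> chebyshev_psi M \<le> chebyshev_psi N"
  unfolding chebyshev_psi_def by (intro sum_mono2) (auto simp: mangoldt_nonneg)

text \<open>The weights \<open>\<lfloor>2N/d\<rfloor> - 2\<lfloor>N/d\<rfloor>\<close> are \<open>0\<close> or \<open>1\<close>, and \<open>1\<close> for \<open>N < d \<le> 2N\<close>: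
  the weighted sum is \<open>ln_fact (2N) - 2 ln_fact N = ln (2N choose N)\<close>.\<close>

lemma chebyshev_psi_double_diff_le: "chebyshev_psi (2 * N) - chebyshev_psi N \<le> 4 * real N"
proof (cases "N = 0")
  case True
  then show ?thesis by (simp add: chebyshev_psi_def)
next
  case False
  have split: "{1..2*N} = {1..N} \<union> {N+1..2*N}" by auto
  have "chebyshev_psi (2*N) - chebyshev_psi N = (\<Sum>d=N+1..2*N. mangoldt d)"
    unfolding chebyshev_psi_def split by (subst sum.union_disjoint) auto
  also have "\<dots> = (\<Sum>d=N+1..2*N. mangoldt d * (real ((2*N) div d) - 2 * real (N div d)))"
  proof (intro sum.cong refl)
    fix d assume d: "d \<in> {N+1..2*N}"
    then have "(2*N) div d = 1" "N div d = 0" by (auto intro!: div_nat_eqI)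
    then show "mangoldt d = mangoldt d * (real ((2*N) div d) - 2 * real (N div d))" by simp
  qed
  also have "\<dots> \<le> (\<Sum>d=1..2*N. mangoldt d * (real ((2*N) div d) - 2 * real (N div d)))"
  proof (intro sum_mono2)
    fix d
    have "2 * (N div d) \<le> (2*N) div d"
      by (metis add_self_div_2 div_mult2_eq div_times_less_eq_dividend mult_2 mult_2_right)
    then show "0 \<le> mangoldt d * (real ((2*N) div d) - 2 * real (N div d))"
      by (intro mult_nonneg_nonneg mangoldt_nonneg) linarith
  qed auto
  also have "\<dots> = ln_fact (2*N) - 2 * (\<Sum>d=1..2*N. mangoldt d * real (N div d))"
    by (simp add: ln_fact_eq_sum_mangoldt algebra_simps sum_subtractf sum_distrib_left)
  also have "(\<Sum>d=1..2*N. mangoldt d * real (N div d)) = ln_fact N"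
    unfolding ln_fact_eq_sum_mangoldt split by (subst sum.union_disjoint) auto
  also have "ln_fact (2*N) - 2 * ln_fact N
      \<le> real (2*N) * ln (real (2*N)) - 2 * (real N * ln (real N) - real N + 1)"
    using ln_fact_le[of "2*N"] ln_fact_ge[of N] False by simp
  also have "\<dots> \<le> 4 * real N"
  proof -
    have "real (2*N) * ln (real (2*N)) = 2 * real N * ln 2 + 2 * real N * ln (real N)"
      using False by (simp add: ln_mult algebra_simps)
    moreover have "real N * ln 2 \<le> real N"
      using ln_2_less_1 mult_left_mono[of "ln 2" 1 "real N"] by simp
    ultimately show ?thesis by simp
  qed
  finally show ?thesis .
qed

lemma chebyshev_psi_le: "chebyshev_psi N \<le> 8 * real N"
proof (induction N rule: less_induct)
  case (less N)
  consider "N = 0" | "N = 1" | M where "N = 2 * M" "1 \<le> M" | M where "N = 2 * M + 1" "1 \<le> M"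
    by (metis One_nat_def add_0 less_one not_less odd_two_times_div_two_succ
        dvd_mult_div_cancel mult_0_right mult_is_0 numeral_2_eq_2)
  then show ?case
  proof cases
    case 3
    then show ?thesis using less[of M] chebyshev_psi_double_diff_le[of M] by simp
  next
    case 4
    have "chebyshev_psi N \<le> chebyshev_psi (2 * (M + 1))" using 4 by (intro chebyshev_psi_mono) auto
    then show ?thesis using less[of "M + 1"] chebyshev_psi_double_diff_le[of "M + 1"] 4 by simp
  qed (auto simp: chebyshev_psi_def)
qed

lemma mertens_sum_bounds:
  assumes "1 \<le> N"
  shows "ln (real N) - 1 \<le> mertens_sum N" "mertens_sum N \<le> ln (real N) + 8"
proof -
  have N: "1 \<le> real N" using assms by simp
  have "ln_fact N \<le> (\<Sum>d=1..N. mangoldt d * (real N / real d))"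
    unfolding ln_fact_eq_sum_mangoldt
  proof (intro sum_mono mult_left_mono mangoldt_nonneg)
    fix d assume d: "d \<in> {1..N}"
    have "real (N div d) * real d \<le> real N"
      by (metis of_nat_le_iff of_nat_mult div_times_less_eq_dividend)
    then show "real (N div d) \<le> real N / real d" using d by (simp add: field_simps)
  qed
  also have "\<dots> = real N * mertens_sum N"
    unfolding mertens_sum_def sum_distrib_left by (intro sum.cong refl) simp
  finally have lower: "ln_fact N \<le> real N * mertens_sum N" .
  have "real N * mertens_sum N - chebyshev_psi N = (\<Sum>d=1..N. mangoldt d * (real N / real d - 1))"
    by (simp add: mertens_sum_def chebyshev_psi_def sum_distrib_left sum_subtractf algebra_simps)
  also have "\<dots> \<le> ln_fact N"
    unfolding ln_fact_eq_sum_mangoldt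
  proof (intro sum_mono mult_left_mono mangoldt_nonneg)
    fix d assume d: "d \<in> {1..N}"
    have "N mod d < d" using d by simp
    then have "N < d * (N div d) + d" using mult_div_mod_eq[of d N] by linarith
    then have "real N < real d * real (N div d) + real d"
      by (metis of_nat_add of_nat_less_iff of_nat_mult)
    then show "real N / real d - 1 \<le> real (N div d)" using d by (simp add: field_simps)
  qed
  finally have upper: "real N * mertens_sum N - chebyshev_psi N \<le> ln_fact N" .
  have "real N * (ln (real N) - 1) \<le> real N * mertens_sum N"
    using lower ln_fact_ge[OF assms] by (simp add: algebra_simps)
  then show "ln (real N) - 1 \<le> mertens_sum N" using N by (simp add: mult_le_cancel_left)
  have "real N * mertens_sum N \<le> real N * (ln (real N) + 8)"
    using upper ln_fact_le[of N] chebyshev_psi_le[of N] by (simp add: algebra_simps)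
  then show "mertens_sum N \<le> ln (real N) + 8" using N by (simp add: mult_le_cancel_left)
qed

lemma mertens_sum_floor_approx:
  assumes "1 \<le> x"
  shows "\<bar>mertens_sum (nat \<lfloor>x\<rfloor>) - ln x\<bar> \<le> 9"
proof -
  define N where "N = nat \<lfloor>x\<rfloor>"
  have N: "1 \<le> N" "real N \<le> x" "x < real N + 1"
    using assms by (simp_all add: N_def le_nat_iff)
  then have "ln (real N) \<le> ln x" "ln x \<le> ln (2 * real N)" by simp_all
  moreover have "ln (2 * real N) = ln 2 + ln (real N)" using N by (simp add: ln_mult)
  ultimately show ?thesis
    using mertens_sum_bounds[OF N(1)] ln_2_less_1 unfolding N_def[symmetric] by linarith
qed

lemma mertens_sum_eq_sum_from_2: "mertens_sum N = (\<Sum>d=2..N. mangoldt d / real d)"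
proof (cases "N = 0")
  case False
  then show ?thesis
    unfolding mertens_sum_def by (subst sum.atLeast_Suc_atMost) (auto simp: numeral_2_eq_2)
qed (simp add: mertens_sum_def)

text \<open>\<open>\<Lambda>(n)\<^sup>2/n = \<Lambda>(n) ln n / n - mangoldt_excess n\<close>, and the excess vanishes unless \<open>n\<close> is
  a prime power \<open>p\<^sup>k\<close> with \<open>k \<ge> 2\<close>.\<close>

definition mangoldt_excess :: "nat \<Rightarrow> real" where
  "mangoldt_excess n = mangoldt n * (ln (real n) - mangoldt n) / real n"

lemma mangoldt_excess_nonneg: "0 \<le> mangoldt_excess n"
  unfolding mangoldt_excess_def using mangoldt_le[of n] mangoldt_nonneg[of n]
  by (cases "n = 0") (auto intro!: divide_nonneg_nonneg mult_nonneg_nonneg)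

lemma mangoldt_excess_prime_power:
  assumes "prime p" "0 < k"
  shows "mangoldt_excess (p ^ k) = ln (real p) ^ 2 * (real (k - 1) / real p ^ k)"
proof -
  have "ln (real (p ^ k)) = real k * ln (real p)"
    using assms by (simp add: ln_realpow prime_gt_0_nat)
  then show ?thesis
    using assms by (simp add: mangoldt_excess_def power2_eq_square algebra_simps)
qed

lemma mangoldt_excess_nonzero_imp_higher_prime_power:
  assumes "mangoldt_excess n \<noteq> 0"
  obtains p k where "prime p" "2 \<le> k" "n = p ^ k"
proof -
  have "mangoldt n \<noteq> (0::real)" using assms by (auto simp: mangoldt_excess_def)
  then obtain p k where pk: "prime p" "0 < k" "n = p ^ k"
    by (auto simp: mangoldt_def primepow_def split: if_splits)
  have "k \<noteq> 1"
  proof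
    assume "k = 1"
    then show False using assms pk mangoldt_excess_prime_power[of p 1] by simp
  qed
  then have "2 \<le> k" using pk(2) by linarith
  then show ?thesis using that pk by blast
qed

lemma prime_power_ratio_le:
  fixes p :: real
  assumes "2 \<le> p" "2 \<le> k"
  shows "real (k - 1) / p ^ k \<le> 2 * (3/4) ^ (k - 2) / p\<^sup>2"
proof -
  obtain j where k: "k = j + 2" using assms by (metis add.commute le_Suc_ex)
  have "1 + real j * (1/2) \<le> (1 + 1/2::real) ^ j" by (rule Bernoulli_inequality) simp
  then have kj: "real (k - 1) \<le> 2 * (3/2) ^ j" using k by simp
  have pj: "(2::real) ^ j \<le> p ^ j" using assms by (intro power_mono) auto
  have "real (k - 1) / p ^ k = real (k - 1) / (p\<^sup>2 * p ^ j)"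
    using k by (simp add: power_add power2_eq_square)
  also have "\<dots> \<le> 2 * (3/2) ^ j / (p\<^sup>2 * 2 ^ j)"
    using assms kj pj by (intro frac_le mult_left_mono) auto
  also have "\<dots> = 2 * (3/4) ^ j / p\<^sup>2"
    by (simp add: power_divide power_mult_distrib[symmetric])
  finally show ?thesis using k by simp
qed

lemma sum_three_quarters_powers_le: "(\<Sum>k=2..N. (3/4::real) ^ (k - 2)) \<le> 4"
proof -
  have "(\<Sum>k=2..N. (3/4::real) ^ (k - 2)) = (\<Sum>j\<in>(\<lambda>k. k - 2) ` {2..N}. (3/4) ^ j)"
    by (subst sum.reindex) (auto simp: inj_on_def)
  also have "\<dots> \<le> (\<Sum>j<N. (3/4) ^ j)" by (intro sum_mono2) auto
  also have "\<dots> \<le> 4" by (simp add: sum_gp_strict)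
  finally show ?thesis .
qed

lemma ln_squared_le:
  fixes x :: real
  assumes "1 \<le> x"
  shows "ln x ^ 2 \<le> 4 * x"
proof -
  have "ln x = 2 * ln (sqrt x)" using assms by (simp add: ln_sqrt)
  also have "\<dots> \<le> 2 * sqrt x" using ln_le_minus_one[of "sqrt x"] assms by simp
  finally have "ln x ^ 2 \<le> (2 * sqrt x) ^ 2" using assms by (intro power_mono) auto
  also have "\<dots> = 4 * x" using assms by (simp add: power_mult_distrib)
  finally show ?thesis .
qed

lemma sum_mangoldt_excess_prime_powers_le:
  assumes "prime p"
  shows "(\<Sum>k=2..N. mangoldt_excess (p ^ k)) \<le> 32 / real p"
proof -
  have p2: "2 \<le> real p" using assms prime_ge_2_nat by auto
  have "(\<Sum>k=2..N. mangoldt_excess (p ^ k)) = (\<Sum>k=2..N. ln (real p) ^ 2 * (real (k - 1) / real p ^ k))"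
    using assms by (intro sum.cong refl) (simp add: mangoldt_excess_prime_power)
  also have "\<dots> \<le> (\<Sum>k=2..N. ln (real p) ^ 2 * (2 * (3/4) ^ (k - 2) / real p ^ 2))"
    using prime_power_ratio_le[OF p2] by (intro sum_mono mult_left_mono) auto
  also have "\<dots> = ln (real p) ^ 2 * 2 / real p ^ 2 * (\<Sum>k=2..N. (3/4) ^ (k - 2))"
    by (simp add: sum_distrib_left sum_divide_distrib algebra_simps)
  also have "\<dots> \<le> ln (real p) ^ 2 * 2 / real p ^ 2 * 4"
    by (intro mult_left_mono sum_three_quarters_powers_le) auto
  also have "\<dots> \<le> (4 * real p) * 2 / real p ^ 2 * 4"
    using ln_squared_le[of "real p"] p2 by (intro mult_right_mono divide_right_mono) auto
  also have "\<dots> = 32 / real p" using p2 by (simp add: power2_eq_square)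
  finally show ?thesis .
qed

lemma harm_le_ln_plus_one:
  assumes "1 \<le> n"
  shows "harm n \<le> ln (real n) + 1"
proof -
  have "harm (Suc (n - 1)) - ln (real (Suc (n - 1))) \<le> harm (Suc 0) - ln (real (Suc 0))"
    using decseq_harm_diff_ln unfolding monotone_on_def by (metis UNIV_I le0)
  then show ?thesis using assms by (simp add: harm_expand)
qed

lemma sum_mangoldt_excess_le:
  assumes "1 \<le> N"
  shows "(\<Sum>n=1..N. mangoldt_excess n) \<le> 32 * (ln (real N) + 1)"
proof -
  define P where "P = {p\<in>{1..N}. prime p}"
  define A where "A = {n\<in>{1..N}. mangoldt_excess n \<noteq> 0}"
  have A: "A \<subseteq> (\<lambda>(p, k). p ^ k) ` (P \<times> {2..N})"
  proof
    fix n assume n: "n \<in> A"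
    then obtain p k where pk: "prime p" "2 \<le> k" "n = p ^ k"
      unfolding A_def by (auto elim: mangoldt_excess_nonzero_imp_higher_prime_power)
    have "2 \<le> p" using pk prime_ge_2_nat by auto
    then have "p \<le> n" "k \<le> n"
      using pk less_exp[of k] power_mono[of 2 p k] by (auto simp: self_le_power)
    then have "p \<le> N" "k \<le> N" using n unfolding A_def by auto
    then show "n \<in> (\<lambda>(p, k). p ^ k) ` (P \<times> {2..N})"
      using n pk \<open>2 \<le> p\<close> unfolding A_def P_def by (intro image_eqI[of _ _ "(p, k)"]) auto
  qed
  have "(\<Sum>n=1..N. mangoldt_excess n) = (\<Sum>n\<in>A. mangoldt_excess n)"
    unfolding A_def by (intro sum.mono_neutral_right) auto
  also have "\<dots> \<le> (\<Sum>n\<in>(\<lambda>(p, k). p ^ k) ` (P \<times> {2..N}). mangoldt_excess n)"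
    using A by (intro sum_mono2) (auto simp: P_def mangoldt_excess_nonneg)
  also have "\<dots> \<le> (\<Sum>(p, k)\<in>P \<times> {2..N}. mangoldt_excess (p ^ k))"
    by (rule order.trans[OF sum_image_le]) (auto simp: P_def mangoldt_excess_nonneg case_prod_unfold)
  also have "\<dots> = (\<Sum>p\<in>P. \<Sum>k=2..N. mangoldt_excess (p ^ k))"
    by (rule sum.cartesian_product[symmetric])
  also have "\<dots> \<le> (\<Sum>p\<in>P. 32 / real p)"
    by (intro sum_mono sum_mangoldt_excess_prime_powers_le) (auto simp: P_def)
  also have "\<dots> \<le> (\<Sum>m=1..N. 32 / real m)"
    unfolding P_def by (intro sum_mono2) auto
  also have "\<dots> = 32 * harm N"
    by (simp add: harm_def sum_distrib_left divide_inverse)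
  also have "\<dots> \<le> 32 * (ln (real N) + 1)"
    using harm_le_ln_plus_one[OF assms] by simp
  finally show ?thesis .
qed

section \<open>Partial summation\<close>

lemma abel_summation_has_integral:
  fixes \<phi> \<phi>' :: "real \<Rightarrow> 'a::banach" and c t :: "nat \<Rightarrow> real"
  assumes "finite S" "\<And>n. n \<in> S \<Longrightarrow> t n \<in> {0..b}"
    and "\<And>x. (\<phi> has_vector_derivative \<phi>' x) (at x)" "\<phi> b = 0"
  shows "((\<lambda>u. sum c {n\<in>S. t n \<le> u} *\<^sub>R \<phi>' u) has_integral - (\<Sum>n\<in>S. c n *\<^sub>R \<phi> (t n))) {0..b}"
proof -
  have "((\<lambda>u. (if t n \<le> u then c n else 0) *\<^sub>R \<phi>' u) has_integral - (c n *\<^sub>R \<phi> (t n))) {0..b}"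
    if n: "n \<in> S" for n
  proof -
    have tn: "0 \<le> t n" "t n \<le> b" using assms(2)[OF n] by auto
    have "(\<phi>' has_integral (\<phi> b - \<phi> (t n))) {t n..b}"
      using tn by (intro fundamental_theorem_of_calculus)
        (auto intro: has_vector_derivative_at_within assms(3))
    then have "((\<lambda>x. if x \<in> cbox (t n) b then \<phi>' x else 0) has_integral - \<phi> (t n)) (cbox 0 b)"
      using tn assms(4) by (intro has_integral_restrict_closed_subinterval) auto
    from has_integral_cmul[OF this, of "c n"]
    have "((\<lambda>x. c n *\<^sub>R (if x \<in> {t n..b} then \<phi>' x else 0)) has_integral - (c n *\<^sub>R \<phi> (t n))) {0..b}"
      by simp
    then show ?thesis by (rule has_integral_eq[rotated]) (use tn in auto)
  qed
  then have "((\<lambda>u. \<Sum>n\<in>S. (if t n \<le> u then c n else 0) *\<^sub>R \<phi>' u) has_integral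
      (\<Sum>n\<in>S. - (c n *\<^sub>R \<phi> (t n)))) {0..b}"
    using assms(1) by (intro has_integral_sum) auto
  then show ?thesis by (simp add: sum.inter_filter[OF assms(1)] scaleR_sum_left sum_negf)
qed

lemma has_integral_id_scaleR_deriv:
  fixes \<phi> \<phi>' :: "real \<Rightarrow> 'a::banach"
  assumes b: "0 \<le> b" and d\<phi>: "\<And>x. (\<phi> has_vector_derivative \<phi>' x) (at x)" and \<phi>b: "\<phi> b = 0"
  shows "((\<lambda>u. u *\<^sub>R \<phi>' u) has_integral - integral {0..b} \<phi>) {0..b}"
proof -
  have "((\<lambda>u. u *\<^sub>R \<phi>' u + \<phi> u) has_integral b *\<^sub>R \<phi> b - 0 *\<^sub>R \<phi> 0) {0..b}"
  proof (rule fundamental_theorem_of_calculus)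
    fix x :: real
    have "((\<lambda>u. u *\<^sub>R \<phi> u) has_vector_derivative x *\<^sub>R \<phi>' x + 1 *\<^sub>R \<phi> x) (at x)"
      by (rule has_vector_derivative_scaleR[OF _ d\<phi>]) (rule DERIV_ident)
    then show "((\<lambda>u. u *\<^sub>R \<phi> u) has_vector_derivative x *\<^sub>R \<phi>' x + \<phi> x) (at x within {0..b})"
      by (simp add: has_vector_derivative_at_within)
  qed (use b in auto)
  moreover have "continuous_on {0..b} \<phi>"
    by (meson continuous_at_imp_continuous_on d\<phi> has_vector_derivative_continuous)
  then have "(\<phi> has_integral integral {0..b} \<phi>) {0..b}"
    by (intro integrable_integral integrable_continuous_interval)
  ultimately have "((\<lambda>u. (u *\<^sub>R \<phi>' u + \<phi> u) - \<phi> u) has_integral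
      (b *\<^sub>R \<phi> b - 0 *\<^sub>R \<phi> 0) - integral {0..b} \<phi>) {0..b}"
    by (rule has_integral_diff)
  then show ?thesis using \<phi>b by simp
qed

text \<open>Abel summation expresses the weighted sum through the partial sums
  \<open>mertens_sum (nat \<lfloor>exp (L * u)\<rfloor>) \<approx> L * u\<close>; the main term \<open>L * u\<close> integrates
  back to \<open>L * \<integral>\<phi>\<close>.\<close>

lemma mertens_sum_deviation_has_integral:
  fixes \<phi> \<phi>' :: "real \<Rightarrow> 'a::banach"
  assumes b: "0 < b" and L: "1 \<le> L"
    and d\<phi>: "\<And>x. (\<phi> has_vector_derivative \<phi>' x) (at x)" and \<phi>b: "\<phi> b = 0"
  shows "((\<lambda>u. (mertens_sum (nat \<lfloor>exp (L * u)\<rfloor>) - L * u) *\<^sub>R \<phi>' u) has_integral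
    L *\<^sub>R integral {0..b} \<phi>
      - (\<Sum>n=2..nat \<lfloor>exp (b * L)\<rfloor>. (mangoldt n / real n) *\<^sub>R \<phi> (ln (real n) / L))) {0..b}"
proof -
  define K where "K = nat \<lfloor>exp (b * L)\<rfloor>"
  define t where "t n = ln (real n) / L" for n :: nat
  define c where "c n = mangoldt n / real n" for n :: nat
  have t_le_iff: "t n \<le> u \<longleftrightarrow> n \<le> nat \<lfloor>exp (L * u)\<rfloor>" if "0 < n" for n u
    using ln_le_iff_le_nat_floor_exp[OF that, of "L * u"] L
    by (simp add: t_def pos_divide_le_eq mult.commute)
  have partial_sums: "sum c {n\<in>{2..K}. t n \<le> u} = mertens_sum (nat \<lfloor>exp (L * u)\<rfloor>)"
    if u: "u \<in> {0..b}" for u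
  proof -
    have "nat \<lfloor>exp (L * u)\<rfloor> \<le> K"
      unfolding K_def using u L by (intro nat_mono floor_mono) (simp add: mult.commute)
    then have "{n\<in>{2..K}. t n \<le> u} = {2..nat \<lfloor>exp (L * u)\<rfloor>}"
      using t_le_iff by auto
    then show ?thesis by (simp add: mertens_sum_eq_sum_from_2 c_def)
  qed
  have "((\<lambda>u. sum c {n\<in>{2..K}. t n \<le> u} *\<^sub>R \<phi>' u) has_integral
      - (\<Sum>n=2..K. c n *\<^sub>R \<phi> (t n))) {0..b}"
  proof (rule abel_summation_has_integral)
    show "t n \<in> {0..b}" if "n \<in> {2..K}" for n
      using ln_div_mem_interval[of n L b] that L unfolding K_def t_def by auto
  qed (use d\<phi> \<phi>b in auto)
  from has_integral_diff[OF this has_integral_cmul[OF has_integral_id_scaleR_deriv, of b \<phi> \<phi>' L]]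
  have "((\<lambda>u. sum c {n\<in>{2..K}. t n \<le> u} *\<^sub>R \<phi>' u - L *\<^sub>R (u *\<^sub>R \<phi>' u)) has_integral
      L *\<^sub>R integral {0..b} \<phi> - (\<Sum>n=2..K. c n *\<^sub>R \<phi> (t n))) {0..b}"
    using b d\<phi> \<phi>b by simp
  then have "((\<lambda>u. (mertens_sum (nat \<lfloor>exp (L * u)\<rfloor>) - L * u) *\<^sub>R \<phi>' u) has_integral
      L *\<^sub>R integral {0..b} \<phi> - (\<Sum>n=2..K. c n *\<^sub>R \<phi> (t n))) {0..b}"
    by (rule has_integral_eq[rotated]) (simp only: partial_sums scaleR_diff_left scaleR_scaleR)
  then show ?thesis by (simp only: K_def t_def c_def)
qed

lemma mertens_weighted_sum_estimate:
  fixes \<phi> \<phi>' :: "real \<Rightarrow> 'a::banach"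
  assumes b: "0 < b" and d\<phi>: "\<And>x. (\<phi> has_vector_derivative \<phi>' x) (at x)"
    and c\<phi>': "continuous_on {0..b} \<phi>'" and \<phi>b: "\<phi> b = 0"
  obtains C where "\<And>L. 1 \<le> L \<Longrightarrow>
    norm ((\<Sum>n=2..nat \<lfloor>exp (b * L)\<rfloor>. (mangoldt n / real n) *\<^sub>R \<phi> (ln (real n) / L))
          - L *\<^sub>R integral {0..b} \<phi>) \<le> C"
proof -
  obtain B where B: "0 \<le> B" "\<And>u. u \<in> {0..b} \<Longrightarrow> norm (\<phi>' u) \<le> B"
    using continuous_on_compact_bound[OF compact_Icc c\<phi>'] by blast
  have "norm ((\<Sum>n=2..nat \<lfloor>exp (b * L)\<rfloor>. (mangoldt n / real n) *\<^sub>R \<phi> (ln (real n) / L))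
      - L *\<^sub>R integral {0..b} \<phi>) \<le> 9 * B * b"
    if L: "1 \<le> L" for L
  proof -
    have "norm ((mertens_sum (nat \<lfloor>exp (L * u)\<rfloor>) - L * u) *\<^sub>R \<phi>' u) \<le> 9 * B"
      if u: "u \<in> {0..b} - {}" for u
    proof -
      have "\<bar>mertens_sum (nat \<lfloor>exp (L * u)\<rfloor>) - L * u\<bar> \<le> 9"
        using mertens_sum_floor_approx[of "exp (L * u)"] u L by simp
      then show ?thesis using B u by (auto intro: mult_mono)
    qed
    from has_integral_bound_real[where S = "{}",
        OF _ _ mertens_sum_deviation_has_integral[OF b L d\<phi> \<phi>b] this]
    show ?thesis using B b by (simp add: norm_minus_commute)
  qed
  then show ?thesis using that by blast
qed

lemma norm_sum_mangoldt_excess_scaleR_le: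
  fixes g :: "real \<Rightarrow> 'a::real_normed_vector"
  assumes L: "1 \<le> L" and b: "0 < b" and B: "0 \<le> B" "\<And>u. u \<in> {0..b} \<Longrightarrow> norm (g u) \<le> B"
  shows "norm (\<Sum>n=2..nat \<lfloor>exp (b * L)\<rfloor>. mangoldt_excess n *\<^sub>R g (ln (real n) / L))
    \<le> B * (32 * (b * L + 1))"
proof -
  define K where "K = nat \<lfloor>exp (b * L)\<rfloor>"
  have K: "1 \<le> K" "ln (real K) \<le> b * L"
    using b L ln_le_iff_le_nat_floor_exp[of K "b * L"] unfolding K_def by (auto intro: le_nat_floor)
  have "norm (\<Sum>n=2..K. mangoldt_excess n *\<^sub>R g (ln (real n) / L)) \<le> (\<Sum>n=2..K. mangoldt_excess n * B)"
  proof (rule order.trans[OF norm_sum sum_mono])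
    fix n assume "n \<in> {2..K}"
    then have "ln (real n) / L \<in> {0..b}" using ln_div_mem_interval[of n L b] L unfolding K_def by auto
    then show "norm (mangoldt_excess n *\<^sub>R g (ln (real n) / L)) \<le> mangoldt_excess n * B"
      using B(2) mangoldt_excess_nonneg[of n] by (simp add: mult_left_mono)
  qed
  also have "\<dots> = B * (\<Sum>n=2..K. mangoldt_excess n)"
    by (simp add: sum_distrib_left mult.commute)
  also have "\<dots> \<le> B * (\<Sum>n=1..K. mangoldt_excess n)"
    by (intro mult_left_mono sum_mono2) (auto simp: mangoldt_excess_nonneg B(1))
  also have "\<dots> \<le> B * (32 * (b * L + 1))"
    using sum_mangoldt_excess_le[OF K(1)] K(2) B(1) by (intro mult_left_mono) auto
  finally show ?thesis unfolding K_def .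
qed

lemma mangoldt_sq_weighted_sum_estimate:
  fixes g g' :: "real \<Rightarrow> 'a::banach"
  assumes b: "0 < b" and dg: "\<And>x. (g has_vector_derivative g' x) (at x)"
    and cg': "continuous_on {0..b} g'" and gb: "g b = 0"
  obtains C where "\<And>L. 1 \<le> L \<Longrightarrow>
    norm ((\<Sum>n=2..nat \<lfloor>exp (b * L)\<rfloor>. (mangoldt n ^ 2 / real n) *\<^sub>R g (ln (real n) / L))
          - L\<^sup>2 *\<^sub>R integral {0..b} (\<lambda>u. u *\<^sub>R g u)) \<le> C * L"
proof -
  have cg: "continuous_on {0..b} g"
    by (meson continuous_at_imp_continuous_on dg has_vector_derivative_continuous)
  obtain B where B: "0 \<le> B" "\<And>u. u \<in> {0..b} \<Longrightarrow> norm (g u) \<le> B"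
    using continuous_on_compact_bound[OF compact_Icc cg] by blast
  have d\<phi>: "((\<lambda>u. u *\<^sub>R g u) has_vector_derivative x *\<^sub>R g' x + g x) (at x)" for x
    using has_vector_derivative_scaleR[OF DERIV_ident dg, of x] by simp
  have c\<phi>': "continuous_on {0..b} (\<lambda>x. x *\<^sub>R g' x + g x)"
    using cg cg' by (intro continuous_intros)
  have \<phi>b: "b *\<^sub>R g b = 0" using gb by simp
  obtain C where C: "\<And>L. 1 \<le> L \<Longrightarrow>
      norm ((\<Sum>n=2..nat \<lfloor>exp (b * L)\<rfloor>. (mangoldt n / real n) *\<^sub>R ((ln (real n) / L) *\<^sub>R g (ln (real n) / L)))
          - L *\<^sub>R integral {0..b} (\<lambda>u. u *\<^sub>R g u)) \<le> C"
    using mertens_weighted_sum_estimate[OF b d\<phi> c\<phi>' \<phi>b] by blast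
  have "norm ((\<Sum>n=2..nat \<lfloor>exp (b * L)\<rfloor>. (mangoldt n ^ 2 / real n) *\<^sub>R g (ln (real n) / L))
          - L\<^sup>2 *\<^sub>R integral {0..b} (\<lambda>u. u *\<^sub>R g u)) \<le> (C + 32 * B * (b + 1)) * L"
    if L: "1 \<le> L" for L
  proof -
    define K where "K = nat \<lfloor>exp (b * L)\<rfloor>"
    define t where "t n = ln (real n) / L" for n :: nat
    define I where "I = integral {0..b} (\<lambda>u. u *\<^sub>R g u)"
    have "mangoldt n ^ 2 / real n = L * (mangoldt n / real n) * t n - mangoldt_excess n" for n
      using L by (cases "n = 0") (simp_all add: t_def mangoldt_excess_def field_simps power2_eq_square)
    then have "(mangoldt n ^ 2 / real n) *\<^sub>R g (t n)
        = L *\<^sub>R ((mangoldt n / real n) *\<^sub>R (t n *\<^sub>R g (t n))) - mangoldt_excess n *\<^sub>R g (t n)" for n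
      by (simp add: scaleR_diff_left)
    then have "(\<Sum>n=2..K. (mangoldt n ^ 2 / real n) *\<^sub>R g (t n))
        = L *\<^sub>R (\<Sum>n=2..K. (mangoldt n / real n) *\<^sub>R (t n *\<^sub>R g (t n)))
          - (\<Sum>n=2..K. mangoldt_excess n *\<^sub>R g (t n))"
      by (simp only: sum_subtractf scaleR_sum_right)
    then have "(\<Sum>n=2..K. (mangoldt n ^ 2 / real n) *\<^sub>R g (t n)) - L\<^sup>2 *\<^sub>R I
        = L *\<^sub>R ((\<Sum>n=2..K. (mangoldt n / real n) *\<^sub>R (t n *\<^sub>R g (t n))) - L *\<^sub>R I)
          - (\<Sum>n=2..K. mangoldt_excess n *\<^sub>R g (t n))"
      by (simp add: scaleR_diff_right power2_eq_square)
    moreover have "norm ((\<Sum>n=2..K. (mangoldt n / real n) *\<^sub>R (t n *\<^sub>R g (t n))) - L *\<^sub>R I) \<le> C"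
      using C[OF L] by (simp add: K_def t_def I_def)
    moreover have "norm (\<Sum>n=2..K. mangoldt_excess n *\<^sub>R g (t n)) \<le> B * (32 * (b * L + 1))"
      using norm_sum_mangoldt_excess_scaleR_le[OF L b B] by (simp add: K_def t_def)
    ultimately have "norm ((\<Sum>n=2..K. (mangoldt n ^ 2 / real n) *\<^sub>R g (t n)) - L\<^sup>2 *\<^sub>R I)
        \<le> L * C + B * (32 * (b * L + 1))"
      using L by (auto intro!: order.trans[OF norm_triangle_ineq4] add_mono mult_left_mono)
    also have "\<dots> \<le> (C + 32 * B * (b + 1)) * L"
      using L B(1) b by (simp add: algebra_simps mult_left_mono)
    finally show ?thesis by (simp add: K_def t_def I_def)
  qed
  then show ?thesis using that by blast
qed

section \<open>Supports, smoothness and the limiting integral\<close>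

lemma notin_fsupp_imp_zero: "u \<notin> fsupp h \<Longrightarrow> h u = 0"
  unfolding fsupp_def using closure_subset[of "{u. h u \<noteq> 0}"] by auto

lemma fsupp_in_open_interval_vanishes_beyond:
  assumes "compact (fsupp h)" "fsupp h \<subseteq> {-a<..<a}" "0 < a"
  obtains b where "0 < b" "b < a" "\<And>u. b \<le> \<bar>u\<bar> \<Longrightarrow> h u = 0"
proof (cases "fsupp h = {}")
  case True
  then show ?thesis using that[of "a / 2"] assms(3) notin_fsupp_imp_zero[of _ h] by auto
next
  case False
  have "compact (abs ` fsupp h)"
    by (intro compact_continuous_image assms(1) continuous_intros)
  moreover have "abs ` fsupp h \<noteq> {}" using False by simp
  ultimately obtain s where s: "s \<in> abs ` fsupp h" "\<And>t. t \<in> abs ` fsupp h \<Longrightarrow> t \<le> s"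
    using compact_attains_sup by metis
  then obtain x where x: "x \<in> fsupp h" "s = \<bar>x\<bar>" by blast
  then have "x \<in> {-a<..<a}" using assms(2) by blast
  then have s_range: "0 \<le> s" "s < a" using x(2) by auto
  show ?thesis
  proof (rule that[of "(s + a) / 2"])
    show "0 < (s + a) / 2" "(s + a) / 2 < a" using s_range by auto
    fix u :: real assume u: "(s + a) / 2 \<le> \<bar>u\<bar>"
    have "u \<notin> fsupp h"
    proof
      assume "u \<in> fsupp h"
      then have "\<bar>u\<bar> \<le> s" using s(2) by simp
      then show False using u s_range by simp
    qed
    then show "h u = 0" by (rule notin_fsupp_imp_zero)
  qed
qed

lemma compact_fsupp_vanishes_beyond:
  assumes "compact (fsupp h)"
  obtains R where "\<And>u. R \<le> \<bar>u\<bar> \<Longrightarrow> h u = 0"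
proof -
  obtain R where R: "\<And>x. x \<in> fsupp h \<Longrightarrow> norm x \<le> R"
    using compact_imp_bounded[OF assms] unfolding bounded_iff by blast
  show ?thesis
  proof (rule that[of "R + 1"])
    fix u :: real assume "R + 1 \<le> \<bar>u\<bar>"
    then have "u \<notin> fsupp h" using R[of u] by auto
    then show "h u = 0" by (rule notin_fsupp_imp_zero)
  qed
qed

lemma smooth_fun_has_continuous_derivative:
  assumes "smooth_fun F"
  obtains F' where "\<And>x. (F has_vector_derivative F' x) (at x)" "continuous_on UNIV F'"
proof -
  obtain D where D: "D 0 = F" "\<And>k x. (D k has_vector_derivative D (Suc k) x) (at x)"
    using assms unfolding smooth_fun_def by blast
  have "continuous_on UNIV (D 1)"
    using D(2)[of 1] by (meson continuous_at_imp_continuous_on has_vector_derivative_continuous)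
  moreover have "(F has_vector_derivative D 1 x) (at x)" for x
    using D(2)[of 0 x] D(1) by simp
  ultimately show ?thesis using that by blast
qed

lemma smooth_fun_square_has_continuous_derivative:
  assumes "smooth_fun F"
  obtains G' where "\<And>x. ((\<lambda>u. (F u)\<^sup>2) has_vector_derivative G' x) (at x)" "continuous_on UNIV G'"
proof -
  obtain F' where dF: "\<And>x. (F has_vector_derivative F' x) (at x)" and cF': "continuous_on UNIV F'"
    using smooth_fun_has_continuous_derivative[OF assms] by blast
  have cF: "continuous_on UNIV F"
    using dF by (meson continuous_at_imp_continuous_on has_vector_derivative_continuous)
  have "((\<lambda>u. (F u)\<^sup>2) has_vector_derivative F x * F' x + F' x * F x) (at x)" for x
    unfolding power2_eq_square by (rule has_vector_derivative_mult[OF dF dF])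
  moreover have "continuous_on UNIV (\<lambda>x. F x * F' x + F' x * F x)"
    using cF cF' by (intro continuous_intros)
  ultimately show ?thesis by (rule that)
qed

lemma fourier_even:
  assumes "\<And>x. f (- x) = f x"
  shows "fourier f (- u) = fourier f u"
proof -
  have "fourier f (- u) = \<bar>- 1\<bar> *\<^sub>R (LINT x|lborel. complex_of_real (f (0 + (- 1) * x))
      * cis (- 2 * pi * (0 + (- 1) * x) * (- u)))"
    unfolding fourier_def by (rule lborel_integral_real_affine) simp
  also have "\<dots> = fourier f u"
    by (simp add: fourier_def assms)
  finally show ?thesis .
qed

lemma integral_min_abs_times_even:
  fixes g :: "real \<Rightarrow> complex"
  assumes cg: "continuous_on UNIV g" and even: "\<And>u. g (- u) = g u"
    and b: "0 < b" "b \<le> 1" and vanish: "\<And>u. b \<le> \<bar>u\<bar> \<Longrightarrow> g u = 0"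
  shows "(LINT u|lborel. complex_of_real (min \<bar>u\<bar> 1) * g u) = 2 * integral {0..b} (\<lambda>u. u *\<^sub>R g u)"
proof -
  define k where "k u = complex_of_real (min \<bar>u\<bar> 1) * g u" for u
  have k_restrict: "k u = indicator {-b..b} u *\<^sub>R k u" for u
    using vanish[of u] by (cases "u \<in> {-b..b}") (auto simp: k_def indicator_def abs_if split: if_splits)
  have "continuous_on {-b..b} k" unfolding k_def
    by (intro continuous_intros continuous_on_subset[OF cg]) auto
  then have "integrable lborel (\<lambda>u. indicator {-b..b} u *\<^sub>R k u)"
    by (rule borel_integrable_compact[OF compact_Icc])
  then have "integrable lborel k" using k_restrict by simp
  then have "(k has_integral (LINT u|lborel. k u)) UNIV" by (rule has_integral_integral_lborel)
  moreover have "k = (\<lambda>u. if u \<in> {-b..b} then k u else 0)"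
    by (rule ext) (subst k_restrict, simp add: indicator_def)
  ultimately have "((\<lambda>u. if u \<in> {-b..b} then k u else 0) has_integral (LINT u|lborel. k u)) UNIV"
    by simp
  then have hk: "(k has_integral (LINT u|lborel. k u)) {-b..b}"
    by (simp only: has_integral_restrict_UNIV)
  then have "(LINT u|lborel. k u) = integral {-b..b} k" by (simp add: integral_unique)
  also have "\<dots> = integral {-b..0} k + integral {0..b} k"
    using hk b by (intro Henstock_Kurzweil_Integration.integral_combine[symmetric]) auto
  also have "integral {0..b} k = integral {0..b} (\<lambda>u. u *\<^sub>R g u)"
    using b by (intro integral_cong) (auto simp: k_def scaleR_conv_of_real)
  also have "integral {-b..0} k = integral {-b..0} (\<lambda>u. (- u) *\<^sub>R g (- u))"
    using b by (intro integral_cong) (auto simp: k_def scaleR_conv_of_real even)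
  also have "\<dots> = integral {0..b} (\<lambda>u. u *\<^sub>R g u)"
    using Henstock_Kurzweil_Integration.integral_reflect_real[of b 0 "\<lambda>v. v *\<^sub>R g v"] by simp
  finally show ?thesis by (simp add: k_def)
qed

section \<open>Averages of trigonometric sums\<close>

lemma integrable_cis_times_weight:
  fixes w :: "real \<Rightarrow> real"
  assumes "0 < H" "integrable lborel w"
  shows "integrable lborel (\<lambda>\<tau>. cis (\<tau> * y) * complex_of_real (w ((\<tau> - T) / H) / H))"
proof -
  have "integrable lborel (\<lambda>\<tau>. w (- T / H + (1 / H) * \<tau>))"
    using assms by (intro lborel_integrable_real_affine) auto
  then have w': "integrable lborel (\<lambda>\<tau>. w ((\<tau> - T) / H) / H)"
    by (intro integrable_divide) (simp add: diff_divide_distrib)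
  have "continuous_on UNIV (\<lambda>\<tau>. cis (\<tau> * y))" by (intro continuous_intros)
  then have cis_measurable: "(\<lambda>\<tau>. cis (\<tau> * y)) \<in> borel_measurable lborel"
    using borel_measurable_continuous_onI by simp
  show ?thesis
  proof (rule Bochner_Integration.integrable_bound[OF w'])
    show "(\<lambda>\<tau>. cis (\<tau> * y) * complex_of_real (w ((\<tau> - T) / H) / H)) \<in> borel_measurable lborel"
      using cis_measurable borel_measurable_integrable[OF w'] by measurable
  qed (simp add: norm_mult norm_divide)
qed

lemma wavg_cis:
  fixes w :: "real \<Rightarrow> real"
  assumes H: "0 < H"
  shows "wavg w (\<lambda>\<tau>. cis (\<tau> * y)) T H = cis (T * y) * fourier w (- H * y / (2 * pi))"
proof -
  have "wavg w (\<lambda>\<tau>. cis (\<tau> * y)) T H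
      = \<bar>H\<bar> *\<^sub>R (LINT s|lborel. cis ((T + H * s) * y) * complex_of_real (w ((T + H * s - T) / H) / H))"
    unfolding wavg_def using H by (intro lborel_integral_real_affine) simp
  also have "\<dots> = H *\<^sub>R (LINT s|lborel. (cis (T * y) / complex_of_real H) *
        (complex_of_real (w s) * cis (- 2 * pi * s * (- H * y / (2 * pi)))))"
  proof -
    have "cis ((T + H * s) * y) * complex_of_real (w ((T + H * s - T) / H) / H) =
        (cis (T * y) / complex_of_real H) * (complex_of_real (w s) * cis (- 2 * pi * s * (- H * y / (2 * pi))))"
      for s
    proof -
      have "(T + H * s) * y = T * y + (- 2 * pi * s * (- H * y / (2 * pi)))"
        by (simp add: field_simps)
      then show ?thesis using H by (simp add: cis_mult[symmetric] field_simps)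
    qed
    then show ?thesis using H by (simp only: abs_of_pos)
  qed
  also have "\<dots> = H *\<^sub>R ((cis (T * y) / complex_of_real H) * fourier w (- H * y / (2 * pi)))"
    by (simp only: integral_mult_right_zero fourier_def)
  also have "\<dots> = cis (T * y) * fourier w (- H * y / (2 * pi))"
    using H by (simp add: scaleR_conv_of_real field_simps)
  finally show ?thesis .
qed

lemma wavg_mult_left: "wavg w (\<lambda>\<tau>. c * W \<tau>) T H = c * wavg w W T H"
  unfolding wavg_def by (simp add: mult.assoc)

lemma wavg_square_cis_sum:
  fixes w :: "real \<Rightarrow> real" and c :: "'i \<Rightarrow> complex" and y :: "'i \<Rightarrow> real"
  assumes H: "0 < H" and w: "integrable lborel w" and I: "finite I"
  shows "wavg w (\<lambda>\<tau>. (\<Sum>i\<in>I. c i * cis (\<tau> * y i))\<^sup>2) T H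
    = (\<Sum>i\<in>I. \<Sum>j\<in>I. c i * c j * (cis (T * (y i + y j)) * fourier w (- H * (y i + y j) / (2 * pi))))"
proof -
  define \<rho> where "\<rho> \<tau> = complex_of_real (w ((\<tau> - T) / H) / H)" for \<tau>
  have wavg_eq: "wavg w W T H = (LINT \<tau>|lborel. W \<tau> * \<rho> \<tau>)" for W
    unfolding wavg_def \<rho>_def ..
  have integrable: "integrable lborel (\<lambda>\<tau>. cis (\<tau> * z) * \<rho> \<tau>)" for z
    unfolding \<rho>_def using H w by (rule integrable_cis_times_weight)
  have "(\<Sum>i\<in>I. c i * cis (\<tau> * y i))\<^sup>2 * \<rho> \<tau>
      = (\<Sum>i\<in>I. \<Sum>j\<in>I. c i * c j * (cis (\<tau> * (y i + y j)) * \<rho> \<tau>))" for \<tau>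
    unfolding power2_eq_square sum_product unfolding sum_distrib_right
    by (intro sum.cong refl) (simp add: distrib_left cis_mult[symmetric] mult_ac)
  then have "wavg w (\<lambda>\<tau>. (\<Sum>i\<in>I. c i * cis (\<tau> * y i))\<^sup>2) T H
      = (\<Sum>i\<in>I. \<Sum>j\<in>I. c i * c j * wavg w (\<lambda>\<tau>. cis (\<tau> * (y i + y j))) T H)"
    unfolding wavg_eq by (simp add: Bochner_Integration.integral_sum integrable)
  then show ?thesis using H by (simp add: wavg_cis)
qed

lemma wavg_square_cos_sum_diagonal:
  fixes w :: "real \<Rightarrow> real" and A :: "nat \<Rightarrow> complex" and l :: "nat \<Rightarrow> real"
  assumes H: "0 < H" and w: "integrable lborel w" "fourier w 0 = 1"
    and vanish: "\<And>y. \<delta> \<le> \<bar>y\<bar> \<Longrightarrow> fourier w (- H * y / (2 * pi)) = 0"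
    and S: "finite S"
    and sep: "\<And>m n. m \<in> S \<Longrightarrow> n \<in> S \<Longrightarrow> m \<noteq> n \<Longrightarrow> \<delta> \<le> \<bar>l m - l n\<bar>"
    and far: "\<And>m n. m \<in> S \<Longrightarrow> n \<in> S \<Longrightarrow> \<delta> \<le> \<bar>l m + l n\<bar>"
  shows "wavg w (\<lambda>\<tau>. (\<Sum>n\<in>S. A n * (cis (\<tau> * l n) + cis (- \<tau> * l n)))\<^sup>2) T H
    = 2 * (\<Sum>n\<in>S. A n ^ 2)"
proof -
  txt \<open>Each cosine pair is a sum over the signs \<open>s = \<plusminus>1\<close>.  In the square, the frequency
    \<open>s l m + s' l n\<close> is zero only for \<open>m = n\<close>, \<open>s' = -s\<close>; every other cross term is
    annihilated by \<open>vanish\<close>.\<close>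
  define I where "I = S \<times> {1, -1 :: real}"
  define c where "c = (\<lambda>(n, s :: real). A n)"
  define y where "y = (\<lambda>(n, s). s * l n)"
  define neg where "neg = (\<lambda>(n :: nat, s :: real). (n, - s))"
  have I: "finite I" using S by (simp add: I_def)
  have expand: "(\<Sum>n\<in>S. A n * (cis (\<tau> * l n) + cis (- \<tau> * l n))) = (\<Sum>i\<in>I. c i * cis (\<tau> * y i))"
    for \<tau>
  proof -
    have "(\<Sum>i\<in>I. c i * cis (\<tau> * y i)) = (\<Sum>(n, s)\<in>S \<times> {1, -1}. A n * cis (\<tau> * (s * l n)))"
      unfolding I_def by (intro sum.cong refl) (auto simp: c_def y_def)
    also have "\<dots> = (\<Sum>n\<in>S. \<Sum>s\<in>{1, -1}. A n * cis (\<tau> * (s * l n)))"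
      by (rule sum.cartesian_product[symmetric])
    finally show ?thesis by (simp add: distrib_left)
  qed
  have kernel: "cis (T * (y i + y j)) * fourier w (- H * (y i + y j) / (2 * pi))
      = (if j = neg i then 1 else 0)" if ij: "i \<in> I" "j \<in> I" for i j
  proof (cases "j = neg i")
    case True
    then show ?thesis using w(2) by (simp add: y_def neg_def split: prod.splits)
  next
    case False
    obtain m s n s' where i: "i = (m, s)" and j: "j = (n, s')" by fastforce
    have "\<delta> \<le> \<bar>y i + y j\<bar>"
      using ij False sep[of m n] far[of m n] unfolding i j I_def y_def neg_def
      by (auto simp: abs_minus_commute)
    then show ?thesis using False vanish by simp
  qed
  have "wavg w (\<lambda>\<tau>. (\<Sum>n\<in>S. A n * (cis (\<tau> * l n) + cis (- \<tau> * l n)))\<^sup>2) T H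
      = (\<Sum>i\<in>I. \<Sum>j\<in>I. if j = neg i then c i * c j else 0)"
    unfolding expand wavg_square_cis_sum[OF H w(1) I] by (intro sum.cong refl) (simp only: kernel, simp)
  also have "\<dots> = (\<Sum>i\<in>I. c i ^ 2)"
    using I by (intro sum.cong refl) (auto simp: I_def c_def neg_def power2_eq_square)
  also have "\<dots> = (\<Sum>(n, s)\<in>S \<times> {1, -1 :: real}. A n ^ 2)"
    unfolding I_def by (intro sum.cong refl) (auto simp: c_def)
  also have "\<dots> = 2 * (\<Sum>n\<in>S. A n ^ 2)"
    by (simp add: sum.cartesian_product[symmetric] sum_distrib_left)
  finally show ?thesis .
qed

lemma N_osc_eq_finite_sum:
  assumes T: "1 < T" and f: "\<And>u. b \<le> \<bar>u\<bar> \<Longrightarrow> fourier f u = 0"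
  shows "N_osc f T \<tau> = - complex_of_real (1 / ln T) *
    (\<Sum>n=2..nat \<lfloor>exp (b * ln T)\<rfloor>. complex_of_real (mangoldt n / sqrt (real n))
       * fourier f (ln (real n) / ln T) * (cis (\<tau> * ln (real n)) + cis (- \<tau> * ln (real n))))"
proof -
  let ?K = "nat \<lfloor>exp (b * ln T)\<rfloor>"
  have "fourier f (ln (real n) / ln T) = 0" if "2 \<le> n" "n \<notin> {2..?K}" for n
  proof -
    have "b * ln T < ln (real n)" using that ln_le_iff_le_nat_floor_exp[of n "b * ln T"] by auto
    then have "b \<le> \<bar>ln (real n) / ln T\<bar>" using T by (simp add: pos_le_divide_eq)
    then show ?thesis by (rule f)
  qed
  then have "(\<Sum>n. if 2 \<le> n then complex_of_real (mangoldt n / sqrt (real n))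
        * fourier f (ln (real n) / ln T) * (cis (\<tau> * ln (real n)) + cis (- \<tau> * ln (real n))) else 0)
      = (\<Sum>n=2..?K. complex_of_real (mangoldt n / sqrt (real n))
        * fourier f (ln (real n) / ln T) * (cis (\<tau> * ln (real n)) + cis (- \<tau> * ln (real n))))"
    by (subst suminf_finite[of "{2..?K}"]) auto
  then show ?thesis unfolding N_osc_def by simp
qed

lemma ln_diff_ge_inverse:
  assumes "0 < m" "m < n" "real n \<le> X"
  shows "1 / X \<le> ln (real n) - ln (real m)"
proof -
  have "1 / X \<le> 2 / (real m + real n)"
    using assms by (simp add: divide_simps)
  also have "\<dots> \<le> 2 * (real n - real m) / (real m + real n)"
  proof -
    have "Suc m \<le> n" using assms(2) by simp
    then have "real m + 1 \<le> real n" by (metis of_nat_Suc of_nat_le_iff add.commute)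
    then show ?thesis using assms(1) by (intro divide_right_mono) auto
  qed
  also have "\<dots> \<le> ln (real n) - ln (real m)"
    using ln_inverse_approx_ge[of "real m" "real n"] assms by simp
  finally show ?thesis .
qed

lemma ln_frequencies_separated:
  assumes X: "1 \<le> X" and mn: "m \<in> {2..nat \<lfloor>X\<rfloor>}" "n \<in> {2..nat \<lfloor>X\<rfloor>}"
  shows "1 / X \<le> \<bar>ln (real m) + ln (real n)\<bar>"
    and "m \<noteq> n \<Longrightarrow> 1 / X \<le> \<bar>ln (real m) - ln (real n)\<bar>"
proof -
  have m: "2 \<le> m" "real m \<le> X" and n: "2 \<le> n" "real n \<le> X"
    using mn X by (auto simp: le_nat_iff le_floor_iff)
  have "1 / X \<le> 1" using X by simp
  also have "\<dots> \<le> ln 2 + ln 2" using ln2_ge_two_thirds by simp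
  also have "\<dots> \<le> ln (real m) + ln (real n)" using m n by (intro add_mono) auto
  finally show "1 / X \<le> \<bar>ln (real m) + ln (real n)\<bar>" by simp
  show "1 / X \<le> \<bar>ln (real m) - ln (real n)\<bar>" if "m \<noteq> n"
  proof (cases "m < n")
    case True
    then have "1 / X \<le> ln (real n) - ln (real m)"
      using m n by (intro ln_diff_ge_inverse) auto
    then show ?thesis by simp
  next
    case False
    then have "n < m" using that by simp
    then have "1 / X \<le> ln (real m) - ln (real n)"
      using m n by (intro ln_diff_ge_inverse) auto
    then show ?thesis by simp
  qed
qed

lemma wavg_N_osc_sq_eq_diagonal:
  fixes f w :: "real \<Rightarrow> real"
  assumes T: "1 < T" and b: "0 < b" and f: "\<And>u. b \<le> \<bar>u\<bar> \<Longrightarrow> fourier f u = 0"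
    and w: "integrable lborel w" "fourier w 0 = 1" "\<And>u. R \<le> \<bar>u\<bar> \<Longrightarrow> fourier w u = 0"
    and large: "2 * pi * R \<le> T powr (a - b)"
  shows "wavg w (\<lambda>\<tau>. (N_osc f T \<tau>)\<^sup>2) T (T powr a) =
    complex_of_real (2 / (ln T)\<^sup>2) * (\<Sum>n=2..nat \<lfloor>exp (b * ln T)\<rfloor>.
      (mangoldt n ^ 2 / real n) *\<^sub>R (fourier f (ln (real n) / ln T))\<^sup>2)"
proof -
  define L where "L = ln T"
  define X where "X = exp (b * L)"
  define K where "K = nat \<lfloor>X\<rfloor>"
  define A where "A n = complex_of_real (mangoldt n / sqrt (real n)) * fourier f (ln (real n) / L)" for n
  have L: "0 < L" using T by (simp add: L_def)
  have X: "1 \<le> X" using b L by (simp add: X_def)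
  have HX: "T powr a / X = T powr (a - b)"
    using T by (simp add: X_def L_def powr_def exp_diff algebra_simps)
  have diagonal: "wavg w (\<lambda>\<tau>. (\<Sum>n=2..K. A n * (cis (\<tau> * ln (real n)) + cis (- \<tau> * ln (real n))))\<^sup>2)
      T (T powr a) = 2 * (\<Sum>n=2..K. A n ^ 2)"
  proof (rule wavg_square_cos_sum_diagonal[where \<delta> = "1 / X"])
    fix y :: real assume y: "1 / X \<le> \<bar>y\<bar>"
    have "R \<le> T powr a / X / (2 * pi)" using large HX by (simp add: field_simps)
    also have "\<dots> \<le> \<bar>- (T powr a) * y / (2 * pi)\<bar>"
      using y T X by (simp add: abs_mult field_simps)
    finally show "fourier w (- (T powr a) * y / (2 * pi)) = 0" by (rule w(3))
  qed (use T w(1,2) X ln_frequencies_separated[of X] in \<open>simp_all add: K_def\<close>)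
  have A_sq: "A n ^ 2 = complex_of_real (mangoldt n ^ 2 / real n) * (fourier f (ln (real n) / L))\<^sup>2"
    for n
  proof -
    have "complex_of_real (sqrt (real n)) ^ 2 = complex_of_real (real n)"
      by (simp only: of_real_power[symmetric] real_sqrt_pow2[OF of_nat_0_le_iff])
    then show ?thesis by (simp add: A_def power_mult_distrib power_divide)
  qed
  have N_osc_eq: "N_osc f T \<tau> = - complex_of_real (1 / L) *
      (\<Sum>n=2..K. A n * (cis (\<tau> * ln (real n)) + cis (- \<tau> * ln (real n))))" for \<tau>
    by (simp only: N_osc_eq_finite_sum[OF T f] L_def X_def K_def A_def)
  have "wavg w (\<lambda>\<tau>. (N_osc f T \<tau>)\<^sup>2) T (T powr a) = complex_of_real (1 / L) ^ 2 *
      wavg w (\<lambda>\<tau>. (\<Sum>n=2..K. A n * (cis (\<tau> * ln (real n)) + cis (- \<tau> * ln (real n))))\<^sup>2) T (T powr a)"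
    unfolding N_osc_eq power_mult_distrib by (simp add: wavg_mult_left)
  also have "\<dots> = complex_of_real (2 / L\<^sup>2) *
      (\<Sum>n=2..K. (mangoldt n ^ 2 / real n) *\<^sub>R (fourier f (ln (real n) / L))\<^sup>2)"
    unfolding diagonal A_sq by (simp add: scaleR_conv_of_real sum_distrib_left power_divide)
  finally show ?thesis by (simp add: L_def X_def K_def)
qed

lemma bigo_inverse_ln_of_scaled_estimate:
  fixes X S :: "real \<Rightarrow> complex" and J :: complex
  assumes S: "\<And>L. 1 \<le> L \<Longrightarrow> norm (S L - L\<^sup>2 *\<^sub>R J) \<le> C * L"
    and X: "\<forall>\<^sub>F T in at_top. X T = complex_of_real (2 / (ln T)\<^sup>2) * S (ln T)"
  shows "(\<lambda>T. X T - 2 * J) \<in> O[at_top](\<lambda>T. complex_of_real (1 / ln T))"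
proof (rule bigoI)
  show "\<forall>\<^sub>F T in at_top. norm (X T - 2 * J) \<le> 2 * C * norm (complex_of_real (1 / ln T))"
    using X eventually_ge_at_top[of "exp 1"]
  proof eventually_elim
    case (elim T)
    define L where "L = ln T"
    have "0 < T" using elim(2) exp_gt_zero[of 1] by linarith
    then have L: "1 \<le> L" using elim(2) by (simp add: L_def ln_ge_iff)
    have "X T - 2 * J = (2 / L\<^sup>2) *\<^sub>R (S L - L\<^sup>2 *\<^sub>R J)"
      unfolding elim(1) using L by (simp add: L_def scaleR_conv_of_real algebra_simps)
    also have "norm \<dots> \<le> (2 / L\<^sup>2) * (C * L)"
      using S[OF L] by (auto intro!: divide_right_mono)
    also have "\<dots> = 2 * C * norm (complex_of_real (1 / ln T))"
      unfolding norm_of_real L_def[symmetric] using L by (simp add: power2_eq_square)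
    finally show ?case .
  qed
qed

theorem proposition6:
  fixes a :: real and f w :: "real \<Rightarrow> real"
  assumes "0 < a" "a \<le> 1"
    and "integrable lborel f" "\<And>x. f (- x) = f x"
    and "smooth_fun (fourier f)" "compact (fsupp (fourier f))"
    and "fsupp (fourier f) \<subseteq> {- a<..<a}"
    and "\<And>x. w x \<ge> 0" "integrable lborel w" "(LINT x|lborel. w x) = 1"
    and "compact (fsupp (fourier w))"
  shows "(\<lambda>T. wavg w (\<lambda>\<tau>. (N_osc f T \<tau>)\<^sup>2) T (T powr a)
            - (LINT u|lborel. complex_of_real (min \<bar>u\<bar> 1) * (fourier f u)\<^sup>2))
         \<in> O[at_top](\<lambda>T. complex_of_real (1 / ln T))"
proof -
  obtain b where b: "0 < b" "b < a" and f: "\<And>u. b \<le> \<bar>u\<bar> \<Longrightarrow> fourier f u = 0"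
    using fsupp_in_open_interval_vanishes_beyond[OF assms(6,7,1)] by blast
  obtain R where R: "\<And>u. R \<le> \<bar>u\<bar> \<Longrightarrow> fourier w u = 0"
    using compact_fsupp_vanishes_beyond[OF assms(11)] by blast
  define g where "g u = (fourier f u)\<^sup>2" for u
  obtain g' where dg: "\<And>x. (g has_vector_derivative g' x) (at x)" and cg': "continuous_on UNIV g'"
    unfolding g_def using smooth_fun_square_has_continuous_derivative[OF assms(5)] by blast
  have cg: "continuous_on UNIV g"
    using dg by (meson continuous_at_imp_continuous_on has_vector_derivative_continuous)
  obtain C where C: "\<And>L. 1 \<le> L \<Longrightarrow>
      norm ((\<Sum>n=2..nat \<lfloor>exp (b * L)\<rfloor>. (mangoldt n ^ 2 / real n) *\<^sub>R g (ln (real n) / L))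
        - L\<^sup>2 *\<^sub>R integral {0..b} (\<lambda>u. u *\<^sub>R g u)) \<le> C * L"
    using mangoldt_sq_weighted_sum_estimate[OF b(1) dg continuous_on_subset[OF cg']] f[of b] b(1)
    by (auto simp: g_def)
  have limit: "(LINT u|lborel. complex_of_real (min \<bar>u\<bar> 1) * (fourier f u)\<^sup>2)
      = 2 * integral {0..b} (\<lambda>u. u *\<^sub>R g u)"
    using integral_min_abs_times_even[OF cg, of b] b assms(2) f
    by (simp add: g_def fourier_even[of f, OF assms(4)])
  have w0: "fourier w 0 = 1" by (simp add: fourier_def assms(10))
  have "\<forall>\<^sub>F T in at_top. 2 * pi * R \<le> T powr (a - b)"
    using real_powr_at_top[of "a - b"] b by (simp add: filterlim_at_top)
  with eventually_gt_at_top[of 1]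
  have "\<forall>\<^sub>F T in at_top. wavg w (\<lambda>\<tau>. (N_osc f T \<tau>)\<^sup>2) T (T powr a) = complex_of_real (2 / (ln T)\<^sup>2) *
      (\<Sum>n=2..nat \<lfloor>exp (b * ln T)\<rfloor>. (mangoldt n ^ 2 / real n) *\<^sub>R g (ln (real n) / ln T))"
  proof eventually_elim
    case (elim T)
    show ?case unfolding g_def
      by (rule wavg_N_osc_sq_eq_diagonal[OF elim(1) b(1) _ assms(9) w0 _ elim(2)]) (fact f, fact R)
  qed
  then show ?thesis unfolding limit by (rule bigo_inverse_ln_of_scaled_estimate[rotated]) (rule C)
qed

end
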